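(* Let $n \ge 3$ and let $x_1 < x_2 < \dots < x_n$ be real numbers; let $h(z) = \prod_{j=1}^n (x_j - z)$ and $q(z) = z - n\,h(z)/h'(z)$. Let $\theta \in \mathbb{C}$ and $R = \max\{|\theta - x_j| : 1 \le j \le n\}$, and let $\overline{B(\theta,R)}$ be the closed disc with center $\theta$ and radius $R$. Then $q\left(\mathbb{C} \setminus \overline{B(\theta,R)}\right) \subset \overline{B(\theta,R)}$. *)

theory Defs
  imports "HOL-Analysis.Analysis" "HOL-Computational_Algebra.Polynomial"
begin

definition hpoly :: "nat \<Rightarrow> (nat \<Rightarrow> real) \<Rightarrow> complex poly" where
  "hpoly n x = (\<Prod>j\<in>{1..n}. [:complex_of_real (x j), -1:])"

definition qmap :: "nat \<Rightarrow> (nat \<Rightarrow> real) \<Rightarrow> complex \<Rightarrow> complex" where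
  "qmap n x z = z - of_nat n * poly (hpoly n x) z / poly (pderiv (hpoly n x)) z"

end

theory Submission
  imports Defs
begin

(* Since h'/h (z) = sum_j 1/(z - x_j), we have q(z) = z - 1/m with m the mean of the points
   w_j = 1/(z - x_j). For z outside the closed disc B = cball theta R, the inversion
   u |-> 1/(z - u) maps B onto another closed disc D not containing 0. All w_j lie in D,
   hence so does their mean m by convexity, and inverting back gives z - 1/m in B. *)

lemma cmod_mult_diff_of_real_squared:
  fixes a w :: complex and k :: real
  shows "(cmod (a * w - of_real k))^2 = (cmod a)^2 * (cmod w)^2 - 2 * k * Re (a * w) + k^2"
proof -
  have "(cmod (a * w - of_real k))^2 = (cmod (a * w))^2 - 2 * k * Re (a * w) + k^2"
    by (simp only: cmod_power2) (simp add: power2_eq_square algebra_simps)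
  then show ?thesis by (simp add: norm_mult power_mult_distrib)
qed

(* The centre and radius come from completing the square in c |w|^2 - 2 Re (a w) + 1 <= 0. *)
lemma norm_diff_inverse_le_iff:
  fixes a w :: complex and R :: real
  defines "c \<equiv> (cmod a)^2 - R^2"
  assumes "0 \<le> R" "R < cmod a" "w \<noteq> 0"
  shows "cmod (a - inverse w) \<le> R \<longleftrightarrow> w \<in> cball (cnj a / of_real c) (R / c)"
proof -
  have "c > 0"
    using assms(2,3) unfolding c_def by (simp add: power_strict_mono)
  have "cmod (a - inverse w) \<le> R \<longleftrightarrow> cmod (a * w - of_real 1) \<le> R * cmod w"
  proof -
    have "a * w - of_real 1 = (a - inverse w) * w"
      using \<open>w \<noteq> 0\<close> by (simp add: field_simps)
    then show ?thesis
      using \<open>w \<noteq> 0\<close> by (simp add: norm_mult)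
  qed
  also have "\<dots> \<longleftrightarrow> (cmod (a * w - of_real 1))^2 \<le> (R * cmod w)^2"
    using \<open>0 \<le> R\<close> by (simp add: power2_le_iff_abs_le)
  also have "\<dots> \<longleftrightarrow> c * (cmod w)^2 - 2 * Re (a * w) + 1 \<le> 0"
    unfolding cmod_mult_diff_of_real_squared c_def
    by (simp add: power_mult_distrib algebra_simps)
  also have "\<dots> \<longleftrightarrow> (cmod (w - cnj a / of_real c))^2 \<le> (R / c)^2"
  proof -
    have "(cmod (w - cnj a / of_real c))^2 = (cmod w)^2 - 2 * Re (a * w) / c + (cmod a / c)^2"
      using \<open>c > 0\<close>
      by (simp only: cmod_power2 power_divide) (simp add: power2_eq_square field_simps)
    moreover have "(cmod a / c)^2 - (R / c)^2 = 1 / c"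
      using \<open>c > 0\<close> by (simp add: c_def power_divide diff_divide_distrib[symmetric] power2_eq_square)
    ultimately have "(cmod (w - cnj a / of_real c))^2 - (R / c)^2
        = (c * (cmod w)^2 - 2 * Re (a * w) + 1) / c"
      using \<open>c > 0\<close> by (simp add: field_simps)
    moreover have "(c * (cmod w)^2 - 2 * Re (a * w) + 1) / c \<le> 0
        \<longleftrightarrow> c * (cmod w)^2 - 2 * Re (a * w) + 1 \<le> 0"
      using \<open>c > 0\<close> by (simp add: divide_le_0_iff)
    ultimately show ?thesis by linarith
  qed
  also have "\<dots> \<longleftrightarrow> w \<in> cball (cnj a / of_real c) (R / c)"
    using \<open>0 \<le> R\<close> \<open>c > 0\<close> by (simp add: dist_norm norm_minus_commute abs_le_square_iff[symmetric])
  finally show ?thesis .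
qed

lemma mean_in_convex:
  fixes C :: "'a::real_vector set"
  assumes "convex C" "finite I" "I \<noteq> {}" "\<And>i. i \<in> I \<Longrightarrow> f i \<in> C"
  shows "(1 / real (card I)) *\<^sub>R (\<Sum>i\<in>I. f i) \<in> C"
  using convex_sum[OF assms(2,1), of "\<lambda>_. 1 / real (card I)" f] assms(2-4)
  by (simp add: scaleR_sum_right)

lemma poly_pderiv_hpoly:
  assumes "poly (hpoly n x) z \<noteq> 0"
  shows "poly (pderiv (hpoly n x)) z = poly (hpoly n x) z * (\<Sum>j=1..n. inverse (z - of_real (x j)))"
proof -
  have "poly (pderiv (hpoly n x)) z = (\<Sum>k=1..n. - (\<Prod>j\<in>{1..n}-{k}. of_real (x j) - z))"
    by (simp add: hpoly_def pderiv_prod poly_sum poly_prod pderiv_pCons)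
  also have "\<dots> = (\<Sum>k=1..n. poly (hpoly n x) z * inverse (z - of_real (x k)))"
  proof (rule sum.cong)
    fix k assume "k \<in> {1..n}"
    then have split: "poly (hpoly n x) z = (of_real (x k) - z) * (\<Prod>j\<in>{1..n}-{k}. of_real (x j) - z)"
      by (simp add: hpoly_def poly_prod prod.remove left_diff_distrib)
    with assms have "z - of_real (x k) \<noteq> 0"
      by auto
    with split show "- (\<Prod>j\<in>{1..n}-{k}. of_real (x j) - z) = poly (hpoly n x) z * inverse (z - of_real (x k))"
      by (simp add: field_simps)
  qed simp
  finally show ?thesis by (simp add: sum_distrib_left)
qed

lemma qmap_eq_logarithmic_derivative:
  assumes "poly (hpoly n x) z \<noteq> 0"
  shows "qmap n x z = z - of_nat n / (\<Sum>j=1..n. inverse (z - of_real (x j)))"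
  using assms by (simp add: qmap_def poly_pderiv_hpoly)

lemma qmap_in_cball:
  assumes "n \<ge> 1" and roots: "\<And>j. j \<in> {1..n} \<Longrightarrow> of_real (x j) \<in> cball \<theta> R"
    and "z \<notin> cball \<theta> R"
  shows "qmap n x z \<in> cball \<theta> R"
proof -
  define a where "a = z - \<theta>"
  define c where "c = (cmod a)^2 - R^2"
  define D where "D = cball (cnj a / of_real c) (R / c)"
  define m where "m = (1 / real n) *\<^sub>R (\<Sum>j=1..n. inverse (z - of_real (x j)))"
  have "0 \<le> R"
    using roots[of 1] \<open>n \<ge> 1\<close> by (auto intro: order_trans[OF zero_le_dist])
  have "R < cmod a"
    using \<open>z \<notin> cball \<theta> R\<close> by (simp add: a_def dist_norm norm_minus_commute)
  then have "c > 0"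
    using \<open>0 \<le> R\<close> by (simp add: c_def power_strict_mono)
  then have "0 \<notin> D"
    using \<open>R < cmod a\<close> by (simp add: D_def norm_divide divide_le_cancel)
  have in_D_iff: "w \<in> D \<longleftrightarrow> cmod (a - inverse w) \<le> R" if "w \<noteq> 0" for w
    using norm_diff_inverse_le_iff[OF \<open>0 \<le> R\<close> \<open>R < cmod a\<close> that] by (simp add: D_def c_def)
  have x_ne_z: "of_real (x j) \<noteq> z" if "j \<in> {1..n}" for j
    using roots[OF that] \<open>z \<notin> cball \<theta> R\<close> by auto
  then have "poly (hpoly n x) z \<noteq> 0"
    by (simp add: hpoly_def poly_prod)
  have "inverse (z - of_real (x j)) \<in> D" if "j \<in> {1..n}" for j
    using roots[OF that] x_ne_z[OF that]
    by (subst in_D_iff) (simp_all add: a_def dist_norm norm_minus_commute)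
  then have "(1 / real (card {1..n})) *\<^sub>R (\<Sum>j=1..n. inverse (z - of_real (x j))) \<in> D"
    using \<open>n \<ge> 1\<close> by (intro mean_in_convex) (auto simp: D_def)
  then have "m \<in> D"
    by (simp add: m_def)
  with \<open>0 \<notin> D\<close> have "cmod (a - inverse m) \<le> R"
    using in_D_iff by (metis (no_types, lifting))
  also have "a - inverse m = qmap n x z - \<theta>"
    using qmap_eq_logarithmic_derivative[OF \<open>poly (hpoly n x) z \<noteq> 0\<close>]
    by (simp add: a_def m_def scaleR_conv_of_real inverse_mult_distrib divide_inverse)
  finally show ?thesis
    by (simp add: dist_norm norm_minus_commute)
qed

theorem mainTheorem9:
  fixes n :: nat and x :: "nat \<Rightarrow> real" and \<theta> :: complex and R :: real
  assumes "n \<ge> 3"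
    and "\<And>i j. 1 \<le> i \<Longrightarrow> i < j \<Longrightarrow> j \<le> n \<Longrightarrow> x i < x j"
    and "R = Max ((\<lambda>j. cmod (\<theta> - complex_of_real (x j))) ` {1..n})"
  shows "qmap n x ` (- cball \<theta> R) \<subseteq> cball \<theta> R"
proof
  have roots: "of_real (x j) \<in> cball \<theta> R" if "j \<in> {1..n}" for j
    using that unfolding assms(3) by (simp add: dist_norm)
  fix y
  assume "y \<in> qmap n x ` (- cball \<theta> R)"
  then obtain z where "z \<notin> cball \<theta> R" and "y = qmap n x z"
    by auto
  with qmap_in_cball[OF _ roots] \<open>n \<ge> 3\<close> show "y \<in> cball \<theta> R"
    by simp
qed

end
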